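(* For $k\in\mathbb{N}$: (1) $\mathcal{G}(2k)=k+1$; (2) $\beta_f(2k)-(k+2)=O(1/k)$; (3) $\beta_c(2k)-(k+2)\to0$ as $k\to\infty$; (4) $\mathcal{G}(2k+1)-(k+2)=O(1/k)$; (5) $\beta_f(2k+1)-(k+2)\to0$ as $k\to\infty$; (6) $\beta_c(2k+1)-(k+2)\to0$ as $k\to\infty$.
   Context: $\mathcal{G}(2k)=k+1$ and $\mathcal{G}(2k+1)=\frac{k+1+\sqrt{k^2+6k+5}}{2}$. $\beta_f(2k)=\frac{k+1+\sqrt{k^2+6k+1}}{2}$, and $\beta_f(2k+1)$ is the largest real root of $x^3-(k+2)x^2+x-(k+1)=0$. Let $(\lambda_i)_{i\ge0}$ be the Thue–Morse sequence: $\lambda_0=0$, $\lambda_{2i}=\lambda_i$, $\lambda_{2i+1}=1-\lambda_i$. For $i\ge1$ set $\lambda_i(m)=k+\lambda_i-\lambda_{i-1}$ if $m=2k$ and $\lambda_i(m)=k+\lambda_i$ if $m=2k+1$. Then $\beta_c(m)$ is the unique solution $\beta>1$ of $\sum_{i=1}^\infty \lambda_i(m)\beta^{-i}=1$. *)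

theory Defs
  imports "HOL-Analysis.Analysis" "HOL-Library.Landau_Symbols"
begin

definition G :: "nat \<Rightarrow> real" where
  "G m = (let k = real (m div 2) in
           if even m then k + 1 else (k + 1 + sqrt (k^2 + 6*k + 5)) / 2)"

definition beta_f :: "nat \<Rightarrow> real" where
  "beta_f m = (let k = real (m div 2) in
           if even m then (k + 1 + sqrt (k^2 + 6*k + 1)) / 2
           else Max {x :: real. x^3 - (k+2) * x^2 + x - (k+1) = 0})"

fun thue_morse :: "nat \<Rightarrow> int" where
  "thue_morse n = (if n = 0 then 0
                   else if even n then thue_morse (n div 2)
                   else 1 - thue_morse (n div 2))"

text \<open>lambda_i(m), meaningful for i \<ge> 1.\<close>
definition lam :: "nat \<Rightarrow> nat \<Rightarrow> int" where
  "lam m i = (let k = int (m div 2) in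
           if even m then k + thue_morse i - thue_morse (i - 1)
           else k + thue_morse i)"

definition beta_c :: "nat \<Rightarrow> real" where
  "beta_c m = (THE \<beta>. \<beta> > 1 \<and>
       (\<lambda>i. real_of_int (lam m (Suc i)) / \<beta> ^ Suc i) sums 1)"

end

theory Submission
  imports Defs "HOL-Real_Asymp.Real_Asymp" "HOL-Computational_Algebra.Polynomial"
begin

text \<open>
  For even \<open>m\<close>, \<open>G\<close> and \<open>\<beta>\<^sub>f\<close> are explicit algebraic expressions, as is \<open>G\<close> for odd \<open>m\<close>.
  \<open>\<beta>\<^sub>f(2k+1)\<close> is a root of \<open>x\<^sup>2 (k + 2 - x) = x - (k + 1)\<close> lying above \<open>k + 1\<close>, which forces
  \<open>0 < k + 2 - x \<le> 1/(k+1)\<^sup>2\<close>.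
  For \<open>\<beta>\<^sub>c\<close>: the digits \<open>\<lambda>\<^sub>i(m)\<close> are bounded, nonnegative and \<open>\<lambda>\<^sub>1(m) > 0\<close>, so
  \<open>\<beta> \<mapsto> \<Sum> \<lambda>\<^sub>i(m) \<beta>\<^sup>-\<^sup>i\<close> is continuous and strictly decreasing on \<open>(1, \<infinity>)\<close> and \<open>\<beta>\<^sub>c(m)\<close> is its
  unique crossing of \<open>1\<close>. The Thue--Morse digits lie in \<open>[k - 1, k + 1]\<close> (resp. \<open>[k, k + 1]\<close>)
  with the first two known, so comparison with eventually constant digit sequences gives
  closed-form geometric bounds on the series, and these trap \<open>\<beta>\<^sub>c(m)\<close> near \<open>k + 2\<close>.
\<close>

definition digit_series :: "(nat \<Rightarrow> real) \<Rightarrow> real \<Rightarrow> real" where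
  "digit_series c \<beta> = (\<Sum>i. c (Suc i) / \<beta> ^ Suc i)"

lemma sums_inverse_power_Suc:
  fixes \<beta> :: real assumes "\<beta> > 1"
  shows "(\<lambda>i. 1 / \<beta> ^ Suc i) sums (1 / (\<beta> - 1))"
proof -
  have "(\<lambda>i. 1/\<beta> * (1/\<beta>) ^ i) sums (1/\<beta> * (1 / (1 - 1/\<beta>)))"
    using assms by (intro sums_mult geometric_sums) simp
  moreover have "1/\<beta> * (1 / (1 - 1/\<beta>)) = 1 / (\<beta> - 1)"
    using assms by (simp add: field_simps)
  ultimately show ?thesis by (simp add: power_one_over)
qed

lemma summable_digit_series:
  fixes c :: "nat \<Rightarrow> real"
  assumes "\<And>i. \<bar>c i\<bar> \<le> M" and "\<beta> > 1"
  shows "summable (\<lambda>i. c (Suc i) / \<beta> ^ Suc i)"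
proof (rule summable_comparison_test)
  show "summable (\<lambda>i. M * (1 / \<beta> ^ Suc i))"
    using sums_inverse_power_Suc[OF \<open>\<beta> > 1\<close>] by (intro summable_mult) (auto simp: sums_iff)
  show "\<exists>N. \<forall>i\<ge>N. norm (c (Suc i) / \<beta> ^ Suc i) \<le> M * (1 / \<beta> ^ Suc i)"
    using assms by (auto simp: abs_divide divide_right_mono)
qed

lemma digit_series_mono:
  fixes c d :: "nat \<Rightarrow> real"
  assumes "\<And>i. \<bar>c i\<bar> \<le> M" "\<And>i. \<bar>d i\<bar> \<le> M" and "\<And>i. i \<ge> 1 \<Longrightarrow> c i \<le> d i" and "\<beta> > 1"
  shows "digit_series c \<beta> \<le> digit_series d \<beta>"
  unfolding digit_series_def
proof (rule suminf_le)
  show "c (Suc i) / \<beta> ^ Suc i \<le> d (Suc i) / \<beta> ^ Suc i" for i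
    using assms by (simp add: divide_right_mono)
qed (use assms summable_digit_series in blast)+

lemma digit_series_eventually_const:
  fixes d :: "nat \<Rightarrow> real"
  assumes "\<And>i. i \<ge> 3 \<Longrightarrow> d i = x" and "\<beta> > 1"
  shows "digit_series d \<beta> = x / (\<beta> - 1) + (d 1 - x) / \<beta> + (d 2 - x) / \<beta>^2"
proof -
  define h where "h i = (if i = 0 then (d 1 - x) / \<beta> else if i = 1 then (d 2 - x) / \<beta>^2 else 0)"
    for i :: nat
  have "h sums (\<Sum>i\<in>{0,1}. h i)"
    by (rule sums_finite) (auto simp: h_def)
  then have "(\<lambda>i. x * (1 / \<beta> ^ Suc i) + h i) sums (x * (1 / (\<beta> - 1)) + (\<Sum>i\<in>{0,1}. h i))"
    using sums_inverse_power_Suc[OF \<open>\<beta> > 1\<close>] by (intro sums_add sums_mult)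
  moreover have "x * (1 / \<beta> ^ Suc i) + h i = d (Suc i) / \<beta> ^ Suc i" for i
  proof (cases "i \<le> 1")
    case False
    then have "d (Suc i) = x" using assms(1) by simp
    with False show ?thesis by (simp add: h_def)
  qed (use assms in \<open>auto simp: h_def le_Suc_eq field_simps numeral_2_eq_2\<close>)
  ultimately show ?thesis
    by (simp add: digit_series_def sums_iff h_def add.assoc)
qed

lemma digit_series_strict_antimono:
  fixes c :: "nat \<Rightarrow> real"
  assumes M: "\<And>i. \<bar>c i\<bar> \<le> M" and nonneg: "\<And>i. i \<ge> 1 \<Longrightarrow> c i \<ge> 0" and "c 1 > 0"
    and "1 < \<beta>\<^sub>1" "\<beta>\<^sub>1 < \<beta>\<^sub>2"
  shows "digit_series c \<beta>\<^sub>2 < digit_series c \<beta>\<^sub>1"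
proof -
  have s1: "summable (\<lambda>i. c (Suc i) / \<beta>\<^sub>1 ^ Suc i)" and s2: "summable (\<lambda>i. c (Suc i) / \<beta>\<^sub>2 ^ Suc i)"
    using summable_digit_series[of c M, OF M] assms by simp_all
  have term_le: "c (Suc i) / \<beta>\<^sub>2 ^ Suc i \<le> c (Suc i) / \<beta>\<^sub>1 ^ Suc i" for i
    using assms by (intro divide_left_mono power_mono) auto
  have "0 < (\<Sum>i. c (Suc i) / \<beta>\<^sub>1 ^ Suc i - c (Suc i) / \<beta>\<^sub>2 ^ Suc i)"
  proof (rule suminf_pos2[where i = 0])
    show "summable (\<lambda>i. c (Suc i) / \<beta>\<^sub>1 ^ Suc i - c (Suc i) / \<beta>\<^sub>2 ^ Suc i)"
      using s1 s2 by (rule summable_diff)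
    show "0 \<le> c (Suc i) / \<beta>\<^sub>1 ^ Suc i - c (Suc i) / \<beta>\<^sub>2 ^ Suc i" for i
      using term_le[of i] by simp
    show "0 < c (Suc 0) / \<beta>\<^sub>1 ^ Suc 0 - c (Suc 0) / \<beta>\<^sub>2 ^ Suc 0"
      using assms by (simp add: divide_strict_left_mono)
  qed
  then show ?thesis
    using suminf_diff[OF s1 s2] by (simp add: digit_series_def)
qed

text \<open>Continuity comes from viewing the series as a power series in \<open>1/\<beta>\<close>,
  whose radius of convergence is at least \<open>1\<close>.\<close>

lemma continuous_on_digit_series:
  fixes c :: "nat \<Rightarrow> real"
  assumes M: "\<And>i. \<bar>c i\<bar> \<le> M" and "a > 1"
  shows "continuous_on {a..b} (digit_series c)"
proof -
  define d where "d n = (if n = 0 then 0 else c n)" for n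
  define P where "P x = (\<Sum>n. d n * x ^ n)" for x :: real
  have summable_P: "summable (\<lambda>n. d n * x ^ n)" if "\<bar>x\<bar> < 1" for x :: real
  proof (rule summable_comparison_test)
    show "summable (\<lambda>n. M * \<bar>x\<bar> ^ n)"
      using that by (intro summable_mult summable_geometric) auto
    show "\<exists>N. \<forall>n\<ge>N. norm (d n * x ^ n) \<le> M * \<bar>x\<bar> ^ n"
      using M[of 0] M by (auto simp: d_def abs_mult power_abs intro!: mult_right_mono)
  qed
  have isCont_P: "isCont P x" if "0 < x" "x < 1" for x
    unfolding P_def by (rule isCont_powser[where K = "(x + 1) / 2"]) (use summable_P that in auto)
  have digit_series_eq: "digit_series c \<beta> = P (inverse \<beta>)" if "\<beta> > 1" for \<beta>
  proof -
    have "summable (\<lambda>n. d n * inverse \<beta> ^ n)"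
      using that by (intro summable_P) (simp add: inverse_less_1_iff)
    from suminf_split_head[OF this] show ?thesis
      by (simp add: P_def d_def digit_series_def power_inverse divide_inverse)
  qed
  have "continuous_on {a..b} (\<lambda>\<beta>. P (inverse \<beta>))"
  proof (intro continuous_at_imp_continuous_on ballI)
    fix \<beta> assume "\<beta> \<in> {a..b}"
    with \<open>a > 1\<close> have "0 < inverse \<beta>" "inverse \<beta> < 1" "\<beta> \<noteq> 0"
      by (auto simp: inverse_less_1_iff)
    then show "isCont (\<lambda>\<beta>. P (inverse \<beta>)) \<beta>"
      by (intro isCont_o2[where f = inverse and g = P] isCont_P) (auto intro!: continuous_intros)
  qed
  then show ?thesis
    by (rule continuous_on_cong[THEN iffD1, rotated -1]) (use digit_series_eq \<open>a > 1\<close> in auto)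
qed

lemma digit_series_root_between:
  fixes c :: "nat \<Rightarrow> real"
  assumes M: "\<And>i. \<bar>c i\<bar> \<le> M" and nonneg: "\<And>i. i \<ge> 1 \<Longrightarrow> c i \<ge> 0" and "c 1 > 0"
    and "1 < a" "a \<le> b" and "digit_series c b \<le> 1" "1 \<le> digit_series c a"
  defines "\<beta> \<equiv> THE \<beta>. \<beta> > 1 \<and> (\<lambda>i. c (Suc i) / \<beta> ^ Suc i) sums 1"
  shows "a \<le> \<beta> \<and> \<beta> \<le> b"
proof -
  obtain z where z: "a \<le> z" "z \<le> b" "digit_series c z = 1"
    using IVT2'[OF assms(6,7,5) continuous_on_digit_series[OF M \<open>1 < a\<close>]] by auto
  have is_root: "\<beta>' > 1 \<and> (\<lambda>i. c (Suc i) / \<beta>' ^ Suc i) sums 1 \<longleftrightarrow> \<beta>' = z" for \<beta>'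
  proof
    assume root: "\<beta>' > 1 \<and> (\<lambda>i. c (Suc i) / \<beta>' ^ Suc i) sums 1"
    then have "digit_series c \<beta>' = 1" by (simp add: digit_series_def sums_iff)
    with z root show "\<beta>' = z"
      using digit_series_strict_antimono[of c M, OF M nonneg \<open>c 1 > 0\<close>, of \<beta>' z]
        digit_series_strict_antimono[of c M, OF M nonneg \<open>c 1 > 0\<close>, of z \<beta>'] \<open>1 < a\<close>
      by (cases \<beta>' z rule: linorder_cases) auto
  next
    assume "\<beta>' = z"
    then show "\<beta>' > 1 \<and> (\<lambda>i. c (Suc i) / \<beta>' ^ Suc i) sums 1"
      using z \<open>1 < a\<close> summable_digit_series[OF M, of z] by (auto simp: digit_series_def sums_iff)
  qed
  then have "\<beta> = z" unfolding \<beta>_def by simp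
  with z show ?thesis by simp
qed

declare thue_morse.simps [simp del] \<comment> \<open>the equation would unfold forever\<close>

lemma thue_morse_0_or_1: "thue_morse n = 0 \<or> thue_morse n = 1"
proof (induction n rule: less_induct)
  case (less n)
  show ?case
    using less[of "n div 2"] thue_morse.simps[of n] by (cases "n = 0") auto
qed

lemma thue_morse_0 [simp]: "thue_morse 0 = 0"
  by (simp add: thue_morse.simps)

lemma thue_morse_1 [simp]: "thue_morse (Suc 0) = 1"
  by (simp add: thue_morse.simps)

lemma thue_morse_2 [simp]: "thue_morse 2 = 1"
  by (simp add: thue_morse.simps)

lemma beta_c_even_between:
  assumes "k \<ge> 1" and "1 < a" "a \<le> b"
    and "(real k + 1) / (b - 1) - 1 / b^2 \<le> 1"
    and "1 \<le> (real k - 1) / (a - 1) + 2 / a + 1 / a^2"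
  shows "a \<le> beta_c (2*k) \<and> beta_c (2*k) \<le> b"
proof -
  define c where "c i = real k + real_of_int (thue_morse i) - real_of_int (thue_morse (i - 1))" for i
  define upper where "upper i = (if i = 2 then real k else real k + 1)" for i :: nat
  define lower where "lower i = (if i = 1 then real k + 1 else if i = 2 then real k else real k - 1)"
    for i :: nat
  have c_range: "real k - 1 \<le> c i \<and> c i \<le> real k + 1" for i
    using thue_morse_0_or_1[of i] thue_morse_0_or_1[of "i - 1"] by (auto simp: c_def)
  have c_12: "c 1 = real k + 1" "c 2 = real k"
    by (simp_all add: c_def)
  have c_nonneg: "c i \<ge> 0" for i
    using c_range[of i] \<open>k \<ge> 1\<close> by simp
  have bounded: "\<bar>c i\<bar> \<le> real k + 1" "\<bar>upper i\<bar> \<le> real k + 1" "\<bar>lower i\<bar> \<le> real k + 1" for i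
    using c_range[of i] by (auto simp: upper_def lower_def)
  have "digit_series c b \<le> digit_series upper b"
    using c_range c_12 assms by (intro digit_series_mono[OF bounded(1,2)]) (auto simp: upper_def)
  also have "\<dots> \<le> 1"
    using assms by (subst digit_series_eventually_const[where x = "real k + 1"]) (auto simp: upper_def)
  finally have at_b: "digit_series c b \<le> 1" .
  have "1 \<le> digit_series lower a"
    using assms by (subst digit_series_eventually_const[where x = "real k - 1"]) (auto simp: lower_def)
  also have "\<dots> \<le> digit_series c a"
    using c_range c_12 assms by (intro digit_series_mono[OF bounded(3,1)]) (auto simp: lower_def)
  finally have at_a: "1 \<le> digit_series c a" .
  have "beta_c (2*k) = (THE \<beta>. \<beta> > 1 \<and> (\<lambda>i. c (Suc i) / \<beta> ^ Suc i) sums 1)"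
    by (simp add: beta_c_def lam_def c_def)
  also have "a \<le> \<dots> \<and> \<dots> \<le> b"
    using c_nonneg c_12 assms by (intro digit_series_root_between[OF bounded(1) _ _ _ _ at_b at_a]) auto
  finally show ?thesis .
qed

lemma beta_c_odd_between:
  assumes "1 < a" "a \<le> b"
    and "(real k + 1) / (b - 1) \<le> 1"
    and "1 \<le> real k / (a - 1) + 1 / a + 1 / a^2"
  shows "a \<le> beta_c (2*k+1) \<and> beta_c (2*k+1) \<le> b"
proof -
  define c where "c i = real k + real_of_int (thue_morse i)" for i
  define upper where "upper i = real k + 1" for i :: nat
  define lower where "lower i = (if i \<le> 2 then real k + 1 else real k)" for i :: nat
  have c_range: "real k \<le> c i \<and> c i \<le> real k + 1" for i
    using thue_morse_0_or_1[of i] by (auto simp: c_def)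
  have c_12: "c 1 = real k + 1" "c 2 = real k + 1"
    by (simp_all add: c_def)
  have c_nonneg: "c i \<ge> 0" for i
    using c_range[of i] by simp
  have bounded: "\<bar>c i\<bar> \<le> real k + 1" "\<bar>upper i\<bar> \<le> real k + 1" "\<bar>lower i\<bar> \<le> real k + 1" for i
    using c_range[of i] by (auto simp: upper_def lower_def)
  have "digit_series c b \<le> digit_series upper b"
    using c_range assms by (intro digit_series_mono[OF bounded(1,2)]) (auto simp: upper_def)
  also have "\<dots> \<le> 1"
    using assms by (subst digit_series_eventually_const[where x = "real k + 1"]) (auto simp: upper_def)
  finally have at_b: "digit_series c b \<le> 1" .
  have "1 \<le> digit_series lower a"
    using assms by (subst digit_series_eventually_const[where x = "real k"]) (auto simp: lower_def)
  also have "\<dots> \<le> digit_series c a"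
    using c_range c_12 assms by (intro digit_series_mono[OF bounded(3,1)]) (auto simp: lower_def le_Suc_eq numeral_2_eq_2)
  finally have at_a: "1 \<le> digit_series c a" .
  have "beta_c (2*k+1) = (THE \<beta>. \<beta> > 1 \<and> (\<lambda>i. c (Suc i) / \<beta> ^ Suc i) sums 1)"
    by (simp add: beta_c_def lam_def c_def)
  also have "a \<le> \<dots> \<and> \<dots> \<le> b"
    using c_nonneg c_12 assms by (intro digit_series_root_between[OF bounded(1) _ _ _ _ at_b at_a]) auto
  finally show ?thesis .
qed

lemma cubic_root_near_top:
  fixes K x :: real
  assumes "K \<ge> 0" "x \<ge> K + 1" "x^3 - (K + 2) * x^2 + x - (K + 1) = 0"
  shows "0 < K + 2 - x \<and> K + 2 - x \<le> 1 / (K + 1)^2"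
proof -
  have factored: "x^2 * (K + 2 - x) = x - (K + 1)"
    using assms(3) by (simp add: algebra_simps power2_eq_square power3_eq_cube)
  have below: "x < K + 2"
  proof (rule ccontr)
    assume "\<not> x < K + 2"
    moreover from this have "x^2 * (K + 2 - x) \<le> 0"
      by (simp add: mult_nonneg_nonpos)
    ultimately show False
      using factored assms(2) by linarith
  qed
  have "(K + 2 - x) * (K + 1)^2 \<le> (K + 2 - x) * x^2"
    using below assms by (intro mult_left_mono power_mono) auto
  also have "\<dots> \<le> 1"
    using factored below by (simp add: mult.commute)
  finally show ?thesis
    using below assms(1) by (simp add: field_simps)
qed

lemma beta_f_odd_near_top:
  "0 < real k + 2 - beta_f (2*k+1) \<and> real k + 2 - beta_f (2*k+1) \<le> 1 / (real k + 1)^2"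
proof -
  define K where "K = real k"
  define p where "p x = x^3 - (K + 2) * x^2 + x - (K + 1)" for x :: real
  have "{x. p x = 0} = {x. poly [:-(K + 1), 1, -(K + 2), 1:] x = 0}"
    by (auto simp: p_def algebra_simps power2_eq_square power3_eq_cube)
  also have "finite \<dots>"
    by (rule poly_roots_finite) simp
  finally have finite_roots: "finite {x. p x = 0}" .
  have "\<exists>x. K + 1 \<le> x \<and> x \<le> K + 2 \<and> p x = 0"
  proof (rule IVT')
    have "p (K + 1) = - ((K + 1)^2)" "p (K + 2) = 1"
      by (simp_all add: p_def algebra_simps power2_eq_square power3_eq_cube)
    then show "p (K + 1) \<le> 0" "0 \<le> p (K + 2)"
      by (simp_all add: K_def)
    show "continuous_on {K + 1..K + 2} p"
      unfolding p_def by (intro continuous_intros)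
  qed simp
  then obtain r where "r \<ge> K + 1" "p r = 0" by blast
  then have "r \<le> Max {x. p x = 0}" "Max {x. p x = 0} \<in> {x. p x = 0}"
    using finite_roots Max_in[OF finite_roots] by (auto intro!: Max_ge)
  with \<open>r \<ge> K + 1\<close> have "Max {x. p x = 0} \<ge> K + 1" "p (Max {x. p x = 0}) = 0"
    by auto
  moreover have "beta_f (2*k+1) = Max {x. p x = 0}"
    by (simp add: beta_f_def p_def K_def Let_def)
  ultimately show ?thesis
    using cubic_root_near_top[of K] unfolding p_def K_def by simp
qed

lemma beta_f_even_minus_bigo: "(\<lambda>k. beta_f (2*k) - (real k + 2)) \<in> O(\<lambda>k. 1 / real k)"
proof -
  have "(\<lambda>k. beta_f (2*k) - (real k + 2))
      = (\<lambda>k. (real k + 1 + sqrt (real k ^ 2 + 6 * real k + 1)) / 2 - (real k + 2))"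
    by (simp add: beta_f_def Let_def)
  also have "\<dots> \<in> O(\<lambda>k. 1 / real k)"
    by real_asymp
  finally show ?thesis .
qed

lemma G_odd_minus_bigo: "(\<lambda>k. G (2*k+1) - (real k + 2)) \<in> O(\<lambda>k. 1 / real k)"
proof -
  have "(\<lambda>k. G (2*k+1) - (real k + 2))
      = (\<lambda>k. (real k + 1 + sqrt (real k ^ 2 + 6 * real k + 5)) / 2 - (real k + 2))"
    by (simp add: G_def Let_def)
  also have "\<dots> \<in> O(\<lambda>k. 1 / real k)"
    by real_asymp
  finally show ?thesis .
qed

lemma beta_f_odd_minus_tendsto: "(\<lambda>k. beta_f (2*k+1) - (real k + 2)) \<longlonglongrightarrow> 0"
proof (rule Lim_null_comparison)
  show "\<forall>\<^sub>F k in sequentially. norm (beta_f (2*k+1) - (real k + 2)) \<le> 1 / (real k + 1)^2"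
  proof (intro always_eventually allI)
    fix k
    have "0 \<le> 1 / (real k + 1)^2" by simp
    then show "norm (beta_f (2*k+1) - (real k + 2)) \<le> 1 / (real k + 1)^2"
      using beta_f_odd_near_top[of k] unfolding real_norm_def abs_le_iff by linarith
  qed
  show "(\<lambda>k. 1 / (real k + 1)^2) \<longlonglongrightarrow> 0"
    by real_asymp
qed

text \<open>Any window around \<open>k + 2\<close> shrinking more slowly than \<open>1/k\<close> satisfies the hypotheses
  of \<open>beta_c_even_between\<close> and \<open>beta_c_odd_between\<close> eventually; \<open>1/\<surd>k\<close> is one.\<close>

lemma beta_c_even_minus_tendsto: "(\<lambda>k. beta_c (2*k) - (real k + 2)) \<longlonglongrightarrow> 0"
proof (rule Lim_null_comparison)
  define a where "a k = real k + 2 - 1 / sqrt (real k)" for k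
  define b where "b k = real k + 2 + 1 / sqrt (real k)" for k
  have "\<forall>\<^sub>F k in sequentially. k \<ge> 1 \<and> 1 < a k \<and> a k \<le> b k
      \<and> (real k + 1) / (b k - 1) - 1 / (b k)^2 \<le> 1
      \<and> 1 \<le> (real k - 1) / (a k - 1) + 2 / a k + 1 / (a k)^2"
    unfolding a_def b_def by (intro eventually_conj eventually_ge_at_top) real_asymp+
  then show "\<forall>\<^sub>F k in sequentially. norm (beta_c (2*k) - (real k + 2)) \<le> 1 / sqrt (real k)"
    by eventually_elim (use beta_c_even_between in \<open>fastforce simp: a_def b_def\<close>)
  show "(\<lambda>k. 1 / sqrt (real k)) \<longlonglongrightarrow> 0"
    by real_asymp
qed

lemma beta_c_odd_minus_tendsto: "(\<lambda>k. beta_c (2*k+1) - (real k + 2)) \<longlonglongrightarrow> 0"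
proof (rule Lim_null_comparison)
  define a where "a k = real k + 2 - 1 / sqrt (real k)" for k
  define b where "b k = real k + 2 + 1 / sqrt (real k)" for k
  have "\<forall>\<^sub>F k in sequentially. 1 < a k \<and> a k \<le> b k
      \<and> (real k + 1) / (b k - 1) \<le> 1
      \<and> 1 \<le> real k / (a k - 1) + 1 / a k + 1 / (a k)^2"
    unfolding a_def b_def by (intro eventually_conj) real_asymp+
  then show "\<forall>\<^sub>F k in sequentially. norm (beta_c (2*k+1) - (real k + 2)) \<le> 1 / sqrt (real k)"
    by eventually_elim (use beta_c_odd_between in \<open>fastforce simp: a_def b_def\<close>)
  show "(\<lambda>k. 1 / sqrt (real k)) \<longlonglongrightarrow> 0"
    by real_asymp
qed

theorem theorem4p8:
  shows "(\<forall>k. G (2*k) = real k + 1)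
    \<and> (\<lambda>k. beta_f (2*k) - (real k + 2)) \<in> O(\<lambda>k. 1 / real k)
    \<and> (\<lambda>k. beta_c (2*k) - (real k + 2)) \<longlonglongrightarrow> 0
    \<and> (\<lambda>k. G (2*k+1) - (real k + 2)) \<in> O(\<lambda>k. 1 / real k)
    \<and> (\<lambda>k. beta_f (2*k+1) - (real k + 2)) \<longlonglongrightarrow> 0
    \<and> (\<lambda>k. beta_c (2*k+1) - (real k + 2)) \<longlonglongrightarrow> 0"
  by (intro conjI allI beta_f_even_minus_bigo beta_c_even_minus_tendsto G_odd_minus_bigo
      beta_f_odd_minus_tendsto beta_c_odd_minus_tendsto) (simp add: G_def)

end
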